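(* Let $n,p,r,d$ be positive integers with $d\le\min(p,r)$, let ${\mathbf S}\in\mathbb R^{p\times p}$ be symmetric positive definite, ${\mathbf F}\in\mathbb R^{n\times r}$ of full column rank, ${\mathbf M}\in\mathbb R^{n\times p}$, ${\mathbf S}_{\mathrm{fit}}=n^{-1}{\mathbf M}^T{\mathbf F}({\mathbf F}^T{\mathbf F})^{-1}{\mathbf F}^T{\mathbf M}$, and assume ${\mathbf S}_{\mathrm{res}}={\mathbf S}-{\mathbf S}_{\mathrm{fit}}$ is positive definite. Fix $\alpha\in\mathbb R^{p\times d}$ with $\alpha^T\alpha=I_d$. Over symmetric positive definite $\Delta\in\mathbb R^{p\times p}$, the function $$G(\Delta)=-\tfrac{pn}{2}\log(2\pi)-\tfrac n2\log|\Delta|-\tfrac n2\operatorname{tr}(\Delta^{-1}{\mathbf S})+\tfrac n2\operatorname{tr}\big[(\alpha^T\Delta\alpha)^{-1}\alpha^T{\mathbf S}_{\mathrm{fit}}\alpha\big]$$ attains its maximum at the $\Delta$ given by $$\Delta^{-1}={\mathbf S}^{-1}+\alpha(\alpha^T{\mathbf S}_{\mathrm{res}}\alpha)^{-1}\alpha^T-\alpha(\alpha^T{\mathbf S}\alpha)^{-1}\alpha^T,$$ and the maximal value equals $$-\tfrac{pn}{2}\big[\log(2\pi)+1\big]-\tfrac n2\log|\alpha^T{\mathbf S}_{\mathrm{res}}\alpha|-\tfrac n2\log|{\mathbf S}|+\tfrac n2\log|\alpha^T{\mathbf S}\alpha|.$$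
   Context: $|A|$ denotes the determinant and $\operatorname{tr}$ the trace. $G$ is the function obtained from the EM $Q$-function after maximizing over the parameter $\xi$; ${\mathbf S}$, ${\mathbf M}$, ${\mathbf F}$ are respectively an averaged conditional second-moment matrix, the matrix of conditional means, and the matrix of centered basis functions of the response. *)

theory Defs
  imports "HOL-Analysis.Analysis"
begin

definition spd :: "real^'p^'p \<Rightarrow> bool" where
  "spd A \<longleftrightarrow> transpose A = A \<and> (\<forall>x. x \<noteq> 0 \<longrightarrow> x \<bullet> (A *v x) > 0)"

definition S_fit :: "real^'r^'n \<Rightarrow> real^'p^'n \<Rightarrow> real^'p^'p" where
  "S_fit F M = (1 / real CARD('n)) *\<^sub>R
     (transpose M ** F ** matrix_inv (transpose F ** F) ** transpose F ** M)"

definition G_fun :: "real \<Rightarrow> real^'p^'p \<Rightarrow> real^'p^'p \<Rightarrow> real^'d^'p \<Rightarrow> real^'p^'p \<Rightarrow> real" where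
  "G_fun nn S Sf \<alpha> \<Delta> =
     - (real CARD('p) * nn / 2) * ln (2 * pi)
     - (nn / 2) * ln (det \<Delta>)
     - (nn / 2) * trace (matrix_inv \<Delta> ** S)
     + (nn / 2) * trace (matrix_inv (transpose \<alpha> ** \<Delta> ** \<alpha>) ** (transpose \<alpha> ** Sf ** \<alpha>))"

end

theory Submission
  imports Defs "HOL-Computational_Algebra.Polynomial"
begin

text \<open>Up to constants, \<open>-2G/n\<close> is \<open>ln |\<Delta>| + tr (\<Delta>\<^sup>-\<^sup>1 S) - tr ((\<alpha>\<^sup>T\<Delta>\<alpha>)\<^sup>-\<^sup>1 \<alpha>\<^sup>T S\<^sub>f\<^sub>i\<^sub>t \<alpha>)\<close>.
  Every positive definite \<open>\<Delta>\<close> arises from a unique positive definite \<open>L\<close> with \<open>\<alpha>\<^sup>T L \<alpha> = \<alpha>\<^sup>T S \<alpha>\<close> by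
  replacing that compression with \<open>A = \<alpha>\<^sup>T\<Delta>\<alpha>\<close>, namely
  \<open>L\<^sup>-\<^sup>1 = \<Delta>\<^sup>-\<^sup>1 - \<alpha> A\<^sup>-\<^sup>1 \<alpha>\<^sup>T + \<alpha> (\<alpha>\<^sup>T S \<alpha>)\<^sup>-\<^sup>1 \<alpha>\<^sup>T\<close>, and Sylvester's determinant identity gives
  \<open>|\<Delta>| |\<alpha>\<^sup>T S \<alpha>| = |L| |A|\<close>. The objective then splits as
  \<open>[ln |L| + tr (L\<^sup>-\<^sup>1 S)] + [ln |A| + tr (A\<^sup>-\<^sup>1 \<alpha>\<^sup>T S\<^sub>r\<^sub>e\<^sub>s \<alpha>)] - ln |\<alpha>\<^sup>T S \<alpha>| - d\<close>, and
  \<open>ln |M| \<le> tr M - dim M\<close> for positive definite \<open>M\<close> (Hadamard's inequality plus \<open>ln x \<le> x - 1\<close>)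
  shows that the brackets are minimised exactly at \<open>L = S\<close> and \<open>A = \<alpha>\<^sup>T S\<^sub>r\<^sub>e\<^sub>s \<alpha>\<close>, which is the
  stated \<open>\<Delta>\<close>.\<close>

lemma matrix_add_rdistrib: "((A::real^'n^'m) + B) ** (C::real^'k^'n) = A ** C + B ** C"
  by (vector matrix_matrix_mult_def sum.distrib[symmetric] field_simps)

lemma matrix_diff_ldistrib: "(A::real^'n^'m) ** (B - C) = A ** B - A ** (C::real^'k^'n)"
  by (vector matrix_matrix_mult_def sum_subtractf[symmetric] field_simps)

lemma matrix_diff_rdistrib: "((A::real^'n^'m) - B) ** (C::real^'k^'n) = A ** C - B ** C"
  by (vector matrix_matrix_mult_def sum_subtractf[symmetric] field_simps)

lemma transpose_add: "transpose ((A::real^'n^'m) + B) = transpose A + transpose B"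
  by (vector transpose_def)

lemma transpose_diff: "transpose ((A::real^'n^'m) - B) = transpose A - transpose B"
  by (vector transpose_def)

lemma inner_matrix_vector_mult: "(x::real^'m) \<bullet> ((A::real^'n^'m) *v y) = (transpose A *v x) \<bullet> y"
  by (simp add: dot_lmul_matrix)

lemma inner_congruence:
  "(x::real^'m) \<bullet> ((transpose P ** B ** P) *v x) = (P *v x) \<bullet> ((B::real^'n^'n) *v (P *v x))"
  by (metis inner_matrix_vector_mult matrix_vector_mul_assoc transpose_transpose)

lemma inner_symmetric_matrix: "transpose A = (A::real^'n^'n) \<Longrightarrow> (A *v x) \<bullet> y = x \<bullet> (A *v y)"
  by (metis inner_commute inner_matrix_vector_mult)

lemma trace_sandwich:
  "trace ((\<alpha>::real^'d^'p) ** B ** transpose \<alpha> ** (S::real^'p^'p)) = trace (B ** (transpose \<alpha> ** S ** \<alpha>))"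
  by (metis matrix_mul_assoc trace_mul_sym)

lemma matrix_inv_inverse:
  fixes A :: "real^'n^'n" assumes "invertible A"
  shows matrix_inv_right: "A ** matrix_inv A = mat 1" and matrix_inv_left: "matrix_inv A ** A = mat 1"
  using someI_ex[OF assms[unfolded invertible_def]] unfolding matrix_inv_def by auto

lemma matrix_inv_unique:
  fixes A B :: "real^'n^'n" assumes "A ** B = mat 1" shows "matrix_inv A = B"
proof -
  have "invertible A" using assms matrix_left_right_inverse invertible_def by blast
  then have "matrix_inv A = (matrix_inv A ** A) ** B" by (simp add: assms matrix_mul_assoc[symmetric])
  then show ?thesis by (simp add: matrix_inv_left \<open>invertible A\<close>)
qed

lemma matrix_inv_matrix_inv:
  fixes A :: "real^'n^'n" assumes "invertible A" shows "matrix_inv (matrix_inv A) = A"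
  by (rule matrix_inv_unique) (rule matrix_inv_left[OF assms])

lemma matrix_inv_transpose:
  fixes A :: "real^'n^'n" assumes "invertible A"
  shows "matrix_inv (transpose A) = transpose (matrix_inv A)"
  by (metis matrix_inv_unique matrix_inv_left[OF assms] matrix_transpose_mul transpose_mat)

lemma trace_matrix_inv_mult:
  fixes A :: "real^'n^'n" assumes "invertible A" shows "trace (matrix_inv A ** A) = real CARD('n)"
  by (simp add: matrix_inv_left[OF assms] trace_I)

lemma det_matrix_inv:
  fixes A :: "real^'n^'n" assumes "invertible A" shows "det (matrix_inv A) = 1 / det A"
proof -
  have "det A * det (matrix_inv A) = 1"
    using det_mul[of A "matrix_inv A"] matrix_inv_right[OF assms] by simp
  moreover from this have "det A \<noteq> 0" by auto
  ultimately show ?thesis by (simp add: field_simps)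
qed

lemma invertible_imp_kernel_zero:
  fixes P :: "real^'n^'n" assumes "invertible P" shows "P *v x = 0 \<Longrightarrow> x = 0"
  using matrix_inv_left[OF assms]
  by (metis matrix_vector_mul_assoc matrix_vector_mul_lid matrix_vector_mult_0_right)

lemma orthonormal_columns_kernel_zero:
  fixes \<alpha> :: "real^'d^'p" assumes "transpose \<alpha> ** \<alpha> = mat 1" shows "\<alpha> *v x = 0 \<Longrightarrow> x = 0"
  by (metis assms matrix_vector_mul_assoc matrix_vector_mul_lid matrix_vector_mult_0_right)

lemma spd_symmetric: "spd A \<Longrightarrow> transpose A = A"
  by (simp add: spd_def)

lemma spd_quadratic_pos: "spd A \<Longrightarrow> x \<noteq> 0 \<Longrightarrow> x \<bullet> (A *v x) > 0"
  by (simp add: spd_def)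

lemma spd_symmetric_entry: "spd A \<Longrightarrow> A$i$j = A$j$i"
  using spd_symmetric[of A] by (simp add: vec_eq_iff transpose_def)

lemma spd_diagonal_pos:
  fixes A :: "real^'n^'n" assumes "spd A" shows "A$k$k > 0"
proof -
  have "axis k 1 \<bullet> (A *v axis k 1) > 0"
    using spd_quadratic_pos[OF assms, of "axis k 1"] by (simp add: axis_eq_0_iff)
  moreover have "(A *v axis k 1)$k = A$k$k"
    by (simp add: matrix_vector_mult_def axis_def if_distrib cong: if_cong)
  ultimately show ?thesis by (simp add: inner_axis')
qed

lemma spd_invertible:
  fixes A :: "real^'n^'n" assumes "spd A" shows "invertible A"
proof -
  have "\<forall>x. A *v x = 0 \<longrightarrow> x = 0"
    using spd_quadratic_pos[OF assms] by (metis inner_zero_right less_irrefl)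
  then show ?thesis using invertible_left_inverse matrix_left_invertible_ker by blast
qed

lemma spd_matrix_inv:
  fixes A :: "real^'n^'n" assumes "spd A" shows "spd (matrix_inv A)"
proof -
  have inv: "invertible A" by (rule spd_invertible[OF assms])
  have "x \<bullet> (matrix_inv A *v x) > 0" if "x \<noteq> 0" for x
  proof -
    let ?y = "matrix_inv A *v x"
    have x: "x = A *v ?y" by (simp add: matrix_vector_mul_assoc matrix_inv_right[OF inv])
    with that have "?y \<noteq> 0" by auto
    then have "?y \<bullet> (A *v ?y) > 0" using spd_quadratic_pos[OF assms] by blast
    then show ?thesis using x by (metis inner_commute)
  qed
  then show ?thesis
    using matrix_inv_transpose[OF inv] spd_symmetric[OF assms] by (simp add: spd_def)
qed

lemma spd_congruence:
  fixes A :: "real^'n^'n" and P :: "real^'m^'n"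
  assumes "spd A" and "\<And>x. P *v x = 0 \<Longrightarrow> x = 0"
  shows "spd (transpose P ** A ** P)"
proof -
  have "transpose (transpose P ** A ** P) = transpose P ** A ** P"
    using spd_symmetric[OF assms(1)] by (simp add: matrix_transpose_mul matrix_mul_assoc)
  moreover have "x \<bullet> ((transpose P ** A ** P) *v x) > 0" if "x \<noteq> 0" for x
  proof -
    have "P *v x \<noteq> 0" using assms(2) that by blast
    then show ?thesis using spd_quadratic_pos[OF assms(1)] by (simp only: inner_congruence)
  qed
  ultimately show ?thesis by (simp add: spd_def)
qed

lemma spd_congruence_invertible:
  fixes A P :: "real^'n^'n" assumes "spd A" and "invertible P"
  shows "spd (transpose P ** A ** P)"
  using spd_congruence[OF assms(1) invertible_imp_kernel_zero[OF assms(2)]] .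

lemma det_add_scaleR_poly:
  fixes C D :: "real^'n^'n" shows "\<exists>q. \<forall>t. det (C + t *\<^sub>R D) = poly q t"
proof
  show "\<forall>t. det (C + t *\<^sub>R D) = poly (\<Sum>p | p permutes (UNIV::'n set).
      [:of_int (sign p):] * (\<Prod>i\<in>UNIV. [:C$i$p i, D$i$p i:])) t"
    by (simp add: det_def poly_sum poly_prod algebra_simps)
qed

lemma det_add_scaleR_mat_nonzero:
  fixes A :: "real^'n^'n" shows "\<exists>t. det (A + t *\<^sub>R mat 1) \<noteq> 0"
proof -
  obtain K where K: "K > 0" "\<And>x. norm (A *v x) \<le> norm x * K"
    using bounded_linear.pos_bounded[OF matrix_vector_mul_bounded_linear[of A]] by blast
  have "x = 0" if "(A + (K + 1) *\<^sub>R mat 1) *v x = 0" for x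
  proof -
    from that have "A *v x = - ((K + 1) *\<^sub>R x)"
      by (simp add: matrix_vector_mult_add_rdistrib scaleR_matrix_vector_assoc[symmetric]
          eq_neg_iff_add_eq_0)
    then have "norm (A *v x) = (K + 1) * norm x" using K(1) by simp
    with K(2)[of x] have "(K + 1) * norm x \<le> K * norm x" by (simp add: mult.commute)
    then show "x = 0" by (simp add: distrib_right)
  qed
  then have "invertible (A + (K + 1) *\<^sub>R mat 1)"
    using invertible_left_inverse matrix_left_invertible_ker by blast
  then show ?thesis using invertible_det_nz by blast
qed

text \<open>Both sides are polynomials in a shift \<open>t\<close> of \<open>A\<close>, and they agree whenever
  \<open>A + t I\<close> is invertible, i.e.\ for all but finitely many \<open>t\<close>.\<close>

lemma sylvester_determinant_square:
  fixes A B :: "real^'n^'n" shows "det (mat 1 + A ** B) = det (mat 1 + B ** A)"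
proof -
  obtain P where P: "\<And>t. det (A + t *\<^sub>R mat 1) = poly P t"
    using det_add_scaleR_poly by blast
  obtain Q1 where Q1: "\<And>t. det ((mat 1 + A ** B) + t *\<^sub>R B) = poly Q1 t"
    using det_add_scaleR_poly by blast
  obtain Q2 where Q2: "\<And>t. det ((mat 1 + B ** A) + t *\<^sub>R B) = poly Q2 t"
    using det_add_scaleR_poly by blast
  have "P \<noteq> 0" using det_add_scaleR_mat_nonzero[of A] P by (metis poly_0)
  have agree: "poly (Q1 - Q2) t = 0" if "poly P t \<noteq> 0" for t
  proof -
    let ?At = "A + t *\<^sub>R mat 1"
    have "?At ** (mat 1 + B ** ?At) = (mat 1 + ?At ** B) ** ?At"
      by (simp add: matrix_add_ldistrib matrix_add_rdistrib matrix_mul_assoc)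
    moreover have "det ?At \<noteq> 0" using that P by simp
    ultimately have "det (mat 1 + B ** ?At) = det (mat 1 + ?At ** B)"
      by (metis det_mul mult.commute mult_left_cancel)
    moreover have "mat 1 + ?At ** B = (mat 1 + A ** B) + t *\<^sub>R B"
      by (simp add: matrix_add_rdistrib scalar_matrix_assoc[symmetric])
    moreover have "mat 1 + B ** ?At = (mat 1 + B ** A) + t *\<^sub>R B"
      by (simp add: matrix_add_ldistrib matrix_scalar_ac scalar_matrix_assoc[symmetric])
    ultimately show ?thesis using Q1 Q2 by simp
  qed
  have "Q1 - Q2 = 0"
  proof (rule ccontr)
    assume "Q1 - Q2 \<noteq> 0"
    then have "finite {t. poly (Q1 - Q2) t = 0}" by (rule poly_roots_finite)
    moreover have "finite {t. poly P t = 0}" using \<open>P \<noteq> 0\<close> by (rule poly_roots_finite)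
    moreover have "UNIV \<subseteq> {t. poly (Q1 - Q2) t = 0} \<union> {t. poly P t = 0}" using agree by auto
    ultimately show False by (metis finite_Un finite_subset infinite_UNIV_char_0)
  qed
  then show ?thesis using Q1[of 0] Q2[of 0] by simp
qed

definition coordinate_embedding :: "('d \<Rightarrow> 'p) \<Rightarrow> real^'d^'p" where
  "coordinate_embedding \<iota> = (\<chi> i a. if i = \<iota> a then 1 else 0)"

lemma sum_over_injective_index:
  fixes \<iota> :: "'d::finite \<Rightarrow> 'p" assumes "inj \<iota>"
  shows "(\<Sum>a\<in>UNIV. if i = \<iota> a then f a else (0::real)) = (if i \<in> range \<iota> then f (inv \<iota> i) else 0)"
proof (cases "i \<in> range \<iota>")
  case True
  then obtain a0 where a0: "i = \<iota> a0" by blast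
  have "(\<Sum>a\<in>UNIV. if i = \<iota> a then f a else (0::real)) = (\<Sum>a\<in>UNIV. if a0 = a then f a else 0)"
    using assms a0 by (intro sum.cong) (auto simp: inj_eq)
  then show ?thesis using True a0 assms by simp
qed (auto intro!: sum.neutral)

lemma transpose_coordinate_embedding_mult:
  fixes \<iota> :: "'d::finite \<Rightarrow> 'p::finite" assumes "inj \<iota>"
  shows "transpose (coordinate_embedding \<iota>) ** coordinate_embedding \<iota> = mat 1"
proof -
  have "(\<Sum>k\<in>UNIV. (if k = \<iota> a then 1 else 0) * (if k = \<iota> b then 1 else (0::real)))
      = (if a = b then 1 else 0)" for a b
    using assms by (simp add: if_distrib[of "\<lambda>x. x * _"] inj_eq cong: if_cong)
  then show ?thesis
    by (simp add: vec_eq_iff mat_def coordinate_embedding_def matrix_matrix_mult_def transpose_def)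
qed

lemma coordinate_embedding_conj_entry:
  fixes W :: "real^'d^'d" and \<iota> :: "'d \<Rightarrow> 'p::finite" assumes "inj \<iota>"
  defines "J \<equiv> coordinate_embedding \<iota>"
  shows "(J ** W ** transpose J)$i$j =
    (if i \<in> range \<iota> \<and> j \<in> range \<iota> then W $ inv \<iota> i $ inv \<iota> j else 0)"
proof -
  have JW: "(J ** W)$i$b = (if i \<in> range \<iota> then W $ inv \<iota> i $ b else 0)" for i b
  proof -
    have "(J ** W)$i$b = (\<Sum>a\<in>UNIV. if i = \<iota> a then W$a$b else 0)"
      unfolding J_def coordinate_embedding_def matrix_matrix_mult_def by (simp, intro sum.cong, auto)
    then show ?thesis using sum_over_injective_index[OF assms(1), of i "\<lambda>a. W$a$b"] by simp
  qed
  have "(J ** W ** transpose J)$i$j = (\<Sum>b\<in>UNIV. if j = \<iota> b then (J ** W)$i$b else 0)"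
    unfolding matrix_matrix_mult_def transpose_def J_def coordinate_embedding_def
    by (simp add: if_distrib cong: if_cong)
  also have "\<dots> = (if j \<in> range \<iota> then (J ** W)$i$(inv \<iota> j) else 0)"
    by (rule sum_over_injective_index[OF assms(1)])
  finally show ?thesis using JW by simp
qed

lemma det_eq_sum_permutes_identity_outside:
  fixes E :: "real^'n^'n"
  assumes E: "\<And>i j. i \<notin> R \<Longrightarrow> E$i$j = (if i = j then 1 else 0)"
  shows "det E = (\<Sum>p | p permutes R. of_int (sign p) * (\<Prod>i\<in>R. E$i$p i))"
proof -
  define g where "g = (\<lambda>p. of_int (sign p) * (\<Prod>i\<in>UNIV. E$i$p i))"
  have vanish: "g p = 0" if "p permutes (UNIV::'n set)" "\<not> p permutes R" for p
  proof -
    have "\<exists>i. i \<notin> R \<and> p i \<noteq> i"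
    proof (rule ccontr)
      assume "\<nexists>i. i \<notin> R \<and> p i \<noteq> i"
      with that(1) have "p permutes R" unfolding permutes_def by blast
      with that(2) show False ..
    qed
    then obtain i where i: "i \<notin> R" "p i \<noteq> i" by blast
    then have "E$i$p i = 0" using E by auto
    then show ?thesis unfolding g_def by (simp add: prod_zero_iff) (use i in blast)
  qed
  have restrict: "(\<Prod>i\<in>UNIV. E$i$p i) = (\<Prod>i\<in>R. E$i$p i)" if "p permutes R" for p
    by (rule prod.mono_neutral_right) (use E permutes_not_in[OF that] in auto)
  have "det E = sum g {p. p permutes (UNIV::'n set)}" unfolding det_def g_def ..
  also have "\<dots> = sum g {p. p permutes R}"
    by (rule sum.mono_neutral_right) (auto simp: finite_permutations vanish intro: permutes_subset)
  finally show ?thesis unfolding g_def by (simp add: restrict)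
qed

lemma bij_betw_map_permutation_range:
  fixes \<iota> :: "'d \<Rightarrow> 'p" assumes inj: "inj \<iota>"
  shows "bij_betw (map_permutation UNIV \<iota>) {t. t permutes (UNIV::'d set)} {p. p permutes range \<iota>}"
proof (rule bij_betw_byWitness[where f'="map_permutation (range \<iota>) (inv \<iota>)"])
  have bij: "bij_betw \<iota> UNIV (range \<iota>)" using inj by (simp add: bij_betw_def)
  have bij': "bij_betw (inv \<iota>) (range \<iota>) UNIV" by (rule bij_betw_inv_into[OF bij])
  show "\<forall>t\<in>{t. t permutes UNIV}. map_permutation (range \<iota>) (inv \<iota>) (map_permutation UNIV \<iota> t) = t"
    using map_permutation_compose_inv[OF bij] inj by auto
  show "\<forall>p\<in>{p. p permutes range \<iota>}. map_permutation UNIV \<iota> (map_permutation (range \<iota>) (inv \<iota>) p) = p"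
    using map_permutation_compose_inv[OF bij'] by (auto simp: f_inv_into_f)
  show "map_permutation UNIV \<iota> ` {t. t permutes UNIV} \<subseteq> {p. p permutes range \<iota>}"
    using map_permutation_permutes[OF bij] by auto
  show "map_permutation (range \<iota>) (inv \<iota>) ` {p. p permutes range \<iota>} \<subseteq> {t. t permutes UNIV}"
    using map_permutation_permutes[OF bij'] by auto
qed

text \<open>Only permutations of the image of \<open>\<iota>\<close> contribute to the Leibniz expansion, and they
  correspond to the permutations of the small index type via \<open>map_permutation\<close>.\<close>

lemma det_one_add_coordinate_embedding_conj:
  fixes W :: "real^'d^'d" and \<iota> :: "'d \<Rightarrow> 'p::finite" assumes inj: "inj \<iota>"
  defines "J \<equiv> coordinate_embedding \<iota>"
  shows "det (mat 1 + J ** W ** transpose J) = det (mat 1 + W)"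
proof -
  define E where "E = mat 1 + J ** W ** transpose J"
  have E: "E$i$j = (if i = j then 1 else 0)
      + (if i \<in> range \<iota> \<and> j \<in> range \<iota> then W $ inv \<iota> i $ inv \<iota> j else 0)" for i j
    using coordinate_embedding_conj_entry[OF inj, of W i j]
    unfolding E_def J_def by (simp add: mat_def)
  have "det E = (\<Sum>p | p permutes range \<iota>. of_int (sign p) * (\<Prod>i\<in>range \<iota>. E$i$p i))"
    by (rule det_eq_sum_permutes_identity_outside) (simp add: E)
  also have "\<dots> = (\<Sum>t | t permutes (UNIV::'d set). of_int (sign (map_permutation UNIV \<iota> t))
      * (\<Prod>i\<in>range \<iota>. E$i$map_permutation UNIV \<iota> t i))"
    by (rule sum.reindex_bij_betw[symmetric, OF bij_betw_map_permutation_range[OF inj]])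
  also have "\<dots> = (\<Sum>t | t permutes (UNIV::'d set). of_int (sign t) * (\<Prod>a\<in>UNIV. (mat 1 + W)$a$t a))"
  proof (rule sum.cong[OF refl])
    fix t assume "t \<in> {t. t permutes (UNIV::'d set)}"
    then have t: "t permutes UNIV" by simp
    have "sign (map_permutation UNIV \<iota> t) = sign t"
      by (rule sign_map_permutation) (use inj t in auto)
    moreover have "map_permutation UNIV \<iota> t (\<iota> a) = \<iota> (t a)" for a
      by (rule map_permutation_apply) (use inj in auto)
    then have "(\<Prod>i\<in>range \<iota>. E$i$map_permutation UNIV \<iota> t i) = (\<Prod>a\<in>UNIV. (mat 1 + W)$a$t a)"
      by (simp add: prod.reindex[OF inj[unfolded inj_on_def[symmetric]]] E inj inj_eq mat_def)
    ultimately show "of_int (sign (map_permutation UNIV \<iota> t)) * (\<Prod>i\<in>range \<iota>. E$i$map_permutation UNIV \<iota> t i)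
        = of_int (sign t) * (\<Prod>a\<in>UNIV. (mat 1 + W)$a$t a)"
      by simp
  qed
  also have "\<dots> = det (mat 1 + W)" unfolding det_def ..
  finally show ?thesis unfolding E_def .
qed

lemma sylvester_determinant:
  fixes U :: "real^'d^'p" and V :: "real^'p^'d" assumes "CARD('d) \<le> CARD('p)"
  shows "det (mat 1 + U ** V) = det (mat 1 + V ** U)"
proof -
  obtain \<iota> :: "'d \<Rightarrow> 'p" where inj: "inj \<iota>"
    using card_le_inj[of "UNIV::'d set" "UNIV::'p set"] assms by auto
  define J where "J = coordinate_embedding \<iota>"
  have "det (mat 1 + V ** U) = det (mat 1 + (J ** V) ** (U ** transpose J))"
    using det_one_add_coordinate_embedding_conj[OF inj, of "V ** U"]
    unfolding J_def by (simp add: matrix_mul_assoc)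
  also have "\<dots> = det (mat 1 + (U ** transpose J) ** (J ** V))"
    by (rule sylvester_determinant_square)
  also have "(U ** transpose J) ** (J ** V) = U ** V"
    using transpose_coordinate_embedding_mult[OF inj]
    unfolding J_def by (metis matrix_mul_assoc matrix_mul_rid)
  finally show ?thesis ..
qed

definition outer :: "real^'n \<Rightarrow> real^'m \<Rightarrow> real^'m^'n" where
  "outer u w = (\<chi> i j. u$i * w$j)"

lemma matrix_mult_outer: "(A::real^'n^'m) ** outer u w = outer (A *v u) w"
  by (simp add: vec_eq_iff outer_def matrix_matrix_mult_def matrix_vector_mult_def
      sum_distrib_left sum_distrib_right ac_simps)

lemma outer_matrix_mult: "outer u w ** (A::real^'m^'n) = outer u (transpose A *v w)"
  by (simp add: vec_eq_iff outer_def matrix_matrix_mult_def matrix_vector_mult_def transpose_def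
      sum_distrib_left ac_simps)

lemma outer_matrix_vector_mult: "outer u w *v x = (w \<bullet> x) *\<^sub>R u"
  by (simp add: vec_eq_iff outer_def matrix_vector_mult_def inner_vec_def sum_distrib_left ac_simps)

lemma outer_add_left: "outer (a + b) w = outer a w + outer b w"
  by (simp add: vec_eq_iff outer_def algebra_simps)

lemma outer_scaleR_left: "outer (c *\<^sub>R a) w = c *\<^sub>R outer a w"
  by (simp add: vec_eq_iff outer_def algebra_simps)

lemma transpose_outer: "transpose (outer u w) = outer w u"
  by (vector outer_def transpose_def)

lemma det_one_add_outer: "det (mat 1 + outer u w) = 1 + w \<bullet> (u::real^'n)"
proof -
  have "outer u w = (columnvector u :: real^1^'n) ** (rowvector w :: real^'n^1)"
    by (simp add: vec_eq_iff outer_def matrix_matrix_mult_def columnvector_def rowvector_def UNIV_1)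
  moreover have "det (mat 1 + (columnvector u :: real^1^'n) ** rowvector w)
      = det (mat 1 + (rowvector w :: real^'n^1) ** columnvector u)"
    by (rule sylvester_determinant) simp
  ultimately have "det (mat 1 + outer u w) = det (mat 1 + (rowvector w :: real^'n^1) ** columnvector u)"
    by simp
  also have "\<dots> = 1 + w \<bullet> u"
    by (simp add: det_1 mat_def matrix_matrix_mult_def rowvector_def columnvector_def inner_vec_def)
  finally show ?thesis .
qed

text \<open>Symmetric Gaussian elimination: clearing row and column \<open>k\<close> by the congruence with
  \<open>I + e\<^sub>k w\<^sup>T\<close>, \<open>w = e\<^sub>k - M e\<^sub>k / M\<^sub>k\<^sub>k\<close>, has determinant 1 and only lowers diagonal entries
  (by \<open>(M\<^sub>i\<^sub>k)\<^sup>2/M\<^sub>k\<^sub>k\<close>).\<close>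

lemma spd_eliminate_row:
  fixes M :: "real^'n^'n" assumes M: "spd M"
  obtains T where "det T = 1"
    "\<And>i j. (transpose T ** M ** T)$i$j = M$i$j - M$i$k * M$k$j / M$k$k + (if i = k \<and> j = k then M$k$k else 0)"
proof
  define m where "m = M$k$k"
  define v where "v = (\<chi> i. M$i$k)"
  define e where "e = (axis k 1 :: real^'n)"
  define w where "w = e - (1/m) *\<^sub>R v"
  have m: "m > 0" unfolding m_def using spd_diagonal_pos[OF M] .
  have "M *v e = v" unfolding e_def v_def
    by (simp add: vec_eq_iff matrix_vector_mult_def axis_def if_distrib cong: if_cong)
  then have Me: "M *v e = v" "e v* M = v"
    by (metis spd_symmetric[OF M] transpose_matrix_vector)+
  have ve: "v \<bullet> e = m" unfolding e_def v_def m_def by (simp add: inner_axis)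
  show "det (mat 1 + outer e w) = 1"
    using ve m by (simp add: det_one_add_outer w_def inner_diff_left e_def inner_axis_axis)
  have "(mat 1 + outer w e) ** M = M + outer w v"
    by (simp add: matrix_add_rdistrib outer_matrix_mult Me)
  moreover have "(M + outer w v) ** (mat 1 + outer e w) = M + outer v w + outer w v + m *\<^sub>R outer w w"
  proof -
    have "(M + outer w v) *v e = v + m *\<^sub>R w"
      by (simp add: matrix_vector_mult_add_rdistrib outer_matrix_vector_mult Me ve)
    then show ?thesis
      by (simp add: matrix_add_ldistrib matrix_mult_outer outer_add_left outer_scaleR_left add_ac)
  qed
  ultimately have "transpose (mat 1 + outer e w) ** M ** (mat 1 + outer e w)
      = M + outer v w + outer w v + m *\<^sub>R outer w w"
    by (simp add: transpose_add transpose_outer)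
  then show "(transpose (mat 1 + outer e w) ** M ** (mat 1 + outer e w))$i$j =
      M$i$j - M$i$k * M$k$j / M$k$k + (if i = k \<and> j = k then M$k$k else 0)" for i j
    using m spd_symmetric_entry[OF M, of k j]
    by (cases "i = k"; cases "j = k") (simp_all add: outer_def w_def e_def v_def m_def axis_def field_simps)
qed

lemma spd_diagonalize_outside:
  fixes M :: "real^'n^'n"
  assumes "finite K" "spd M" "\<And>i j. i \<notin> K \<Longrightarrow> j \<noteq> i \<Longrightarrow> M$i$j = 0"
  shows "\<exists>T. det T = 1 \<and> (\<forall>i j. i \<noteq> j \<longrightarrow> (transpose T ** M ** T)$i$j = 0)
    \<and> (\<forall>i. (transpose T ** M ** T)$i$i \<le> M$i$i)"
  using assms
proof (induction K arbitrary: M rule: finite_induct)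
  case empty
  then show ?case by (intro exI[of _ "mat 1"]) auto
next
  case (insert k K)
  obtain T1 where T1: "det T1 = 1"
    "\<And>i j. (transpose T1 ** M ** T1)$i$j
       = M$i$j - M$i$k * M$k$j / M$k$k + (if i = k \<and> j = k then M$k$k else 0)"
    using spd_eliminate_row[OF insert.prems(1)] by blast
  define M1 where "M1 = transpose T1 ** M ** T1"
  have pos: "M$k$k > 0" using spd_diagonal_pos[OF insert.prems(1)] .
  have spd_M1: "spd M1" unfolding M1_def
    using spd_congruence_invertible[OF insert.prems(1)] T1(1) by (simp add: invertible_det_nz)
  have "M1$i$j = 0" if "i \<notin> K" "j \<noteq> i" for i j
  proof (cases "i = k")
    case True
    then show ?thesis using pos that(2) unfolding M1_def T1(2) by simp
  next
    case False
    then have "M$i$j = 0" "M$i$k = 0" using insert.prems(2) that by auto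
    then show ?thesis using False unfolding M1_def T1(2) by simp
  qed
  then obtain T2 where T2: "det T2 = 1" "\<forall>i j. i \<noteq> j \<longrightarrow> (transpose T2 ** M1 ** T2)$i$j = 0"
    "\<forall>i. (transpose T2 ** M1 ** T2)$i$i \<le> M1$i$i"
    using insert.IH[OF spd_M1] by blast
  have diag_le: "M1$i$i \<le> M$i$i" for i
  proof (cases "i = k")
    case True
    then show ?thesis using pos unfolding M1_def T1(2) by simp
  next
    case False
    have "0 \<le> M$i$k * M$i$k / M$k$k" using pos by simp
    then show ?thesis using False spd_symmetric_entry[OF insert.prems(1), of k i]
      unfolding M1_def T1(2) by simp
  qed
  have congr: "transpose (T1 ** T2) ** M ** (T1 ** T2) = transpose T2 ** M1 ** T2"
    unfolding M1_def by (simp add: matrix_transpose_mul matrix_mul_assoc)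
  show ?case
  proof (intro exI[of _ "T1 ** T2"] conjI allI impI)
    show "det (T1 ** T2) = 1" using T1(1) T2(1) by (simp add: det_mul)
    show "(transpose (T1 ** T2) ** M ** (T1 ** T2))$i$j = 0" if "i \<noteq> j" for i j
      using T2(2) that unfolding congr by blast
    show "(transpose (T1 ** T2) ** M ** (T1 ** T2))$i$i \<le> M$i$i" for i
      using T2(3) diag_le[of i] unfolding congr by (blast intro: order_trans)
  qed
qed

lemma spd_unimodular_diagonalization:
  fixes M :: "real^'n^'n" assumes "spd M"
  obtains T where "det T = 1" "\<And>i j. i \<noteq> j \<Longrightarrow> (transpose T ** M ** T)$i$j = 0"
    "\<And>i. 0 < (transpose T ** M ** T)$i$i" "\<And>i. (transpose T ** M ** T)$i$i \<le> M$i$i"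
proof -
  have "\<exists>T. det T = 1 \<and> (\<forall>i j. i \<noteq> j \<longrightarrow> (transpose T ** M ** T)$i$j = 0)
      \<and> (\<forall>i. (transpose T ** M ** T)$i$i \<le> M$i$i)"
    by (rule spd_diagonalize_outside[of UNIV]) (simp_all add: assms)
  then obtain T where T: "det T = 1" "\<forall>i j. i \<noteq> j \<longrightarrow> (transpose T ** M ** T)$i$j = 0"
    "\<forall>i. (transpose T ** M ** T)$i$i \<le> M$i$i"
    by blast
  have "spd (transpose T ** M ** T)"
    by (rule spd_congruence_invertible[OF assms]) (simp add: T(1) invertible_det_nz)
  show ?thesis
  proof (rule that)
    show "det T = 1" by (rule T(1))
    show "(transpose T ** M ** T)$i$j = 0" if "i \<noteq> j" for i j using T(2) that by blast
    show "0 < (transpose T ** M ** T)$i$i" for i by (rule spd_diagonal_pos) fact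
    show "(transpose T ** M ** T)$i$i \<le> M$i$i" for i using T(3) by blast
  qed
qed

lemma det_eq_prod_of_unimodular_diagonalization:
  fixes M T :: "real^'n^'n"
  assumes "det T = 1" "\<And>i j. i \<noteq> j \<Longrightarrow> (transpose T ** M ** T)$i$j = 0"
  shows "det M = (\<Prod>i\<in>UNIV. (transpose T ** M ** T)$i$i)"
proof -
  have "det (transpose T ** M ** T) = det M" using assms(1) by (simp add: det_mul)
  moreover have "det (transpose T ** M ** T) = (\<Prod>i\<in>UNIV. (transpose T ** M ** T)$i$i)"
    by (rule det_diagonal) (use assms(2) in blast)
  ultimately show ?thesis by simp
qed

lemma spd_det_pos:
  fixes M :: "real^'n^'n" assumes "spd M" shows "det M > 0"
proof -
  obtain T where T: "det T = 1" "\<And>i j. i \<noteq> j \<Longrightarrow> (transpose T ** M ** T)$i$j = 0"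
    "\<And>i. 0 < (transpose T ** M ** T)$i$i" "\<And>i. (transpose T ** M ** T)$i$i \<le> M$i$i"
    using spd_unimodular_diagonalization[OF assms] by blast
  have "det M = (\<Prod>i\<in>UNIV. (transpose T ** M ** T)$i$i)"
    by (rule det_eq_prod_of_unimodular_diagonalization[OF T(1,2)])
  also have "\<dots> > 0" by (rule prod_pos) (use T(3) in blast)
  finally show ?thesis .
qed

lemma hadamard_inequality:
  fixes M :: "real^'n^'n" assumes "spd M" shows "det M \<le> (\<Prod>i\<in>UNIV. M$i$i)"
proof -
  obtain T where T: "det T = 1" "\<And>i j. i \<noteq> j \<Longrightarrow> (transpose T ** M ** T)$i$j = 0"
    "\<And>i. 0 < (transpose T ** M ** T)$i$i" "\<And>i. (transpose T ** M ** T)$i$i \<le> M$i$i"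
    using spd_unimodular_diagonalization[OF assms] by blast
  have "det M = (\<Prod>i\<in>UNIV. (transpose T ** M ** T)$i$i)"
    by (rule det_eq_prod_of_unimodular_diagonalization[OF T(1,2)])
  also have "\<dots> \<le> (\<Prod>i\<in>UNIV. M$i$i)"
    by (rule prod_mono) (use T(3,4) in \<open>auto intro: less_imp_le\<close>)
  finally show ?thesis .
qed

lemma ln_det_le_trace_minus_card:
  fixes M :: "real^'n^'n" assumes "spd M" shows "ln (det M) \<le> trace M - real CARD('n)"
proof -
  have pos: "\<And>i. M$i$i > 0" using spd_diagonal_pos[OF assms] .
  have "ln (det M) \<le> ln (\<Prod>i\<in>UNIV. M$i$i)"
    using hadamard_inequality[OF assms] spd_det_pos[OF assms] by simp
  also have "\<dots> = (\<Sum>i\<in>UNIV. ln (M$i$i))"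
    by (rule ln_prod) (simp_all add: pos order_less_imp_not_eq2)
  also have "\<dots> \<le> (\<Sum>i\<in>UNIV. M$i$i - 1)"
    by (rule sum_mono) (rule ln_le_minus_one[OF pos])
  also have "\<dots> = trace M - real CARD('n)" by (simp add: trace_def sum_subtractf)
  finally show ?thesis .
qed

definition diag_matrix :: "('n \<Rightarrow> real) \<Rightarrow> real^'n^'n" where
  "diag_matrix f = (\<chi> i j. if i = j then f i else 0)"

lemma spd_congruent_to_identity:
  fixes L :: "real^'n^'n" assumes "spd L"
  obtains P :: "real^'n^'n" where "invertible P" "transpose P ** L ** P = mat 1"
proof -
  obtain T where T: "det T = 1" "\<And>i j. i \<noteq> j \<Longrightarrow> (transpose T ** L ** T)$i$j = 0"
    "\<And>i. 0 < (transpose T ** L ** T)$i$i" "\<And>i. (transpose T ** L ** T)$i$i \<le> L$i$i"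
    using spd_unimodular_diagonalization[OF assms] by blast
  define D where "D = transpose T ** L ** T"
  define G where "G = diag_matrix (\<lambda>i. 1 / sqrt (D$i$i))"
  have "transpose G = G"
    by (simp add: vec_eq_iff G_def diag_matrix_def transpose_def)
  then have "transpose (T ** G) ** L ** (T ** G) = G ** D ** G"
    unfolding D_def by (simp add: matrix_transpose_mul matrix_mul_assoc)
  also have "\<dots> = mat 1"
  proof -
    have "D$i$i \<noteq> 0" "\<bar>D$i$i\<bar> = D$i$i" for i
      using T(3)[of i] unfolding D_def by auto
    then show ?thesis
      using T(2) unfolding D_def[symmetric]
      by (auto simp: vec_eq_iff mat_def G_def diag_matrix_def matrix_matrix_mult_def
        if_distrib if_distribR field_simps cong: if_cong)
  qed
  finally have PLP: "transpose (T ** G) ** L ** (T ** G) = mat 1" .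
  then have "det (T ** G) * det L * det (T ** G) = 1"
    by (metis det_I det_mul det_transpose)
  then have "invertible (T ** G)" by (auto simp: invertible_det_nz)
  then show ?thesis using PLP by (rule that)
qed

lemma ln_det_trace_bound:
  fixes L S :: "real^'n^'n" assumes L: "spd L" and S: "spd S"
  shows "ln (det S) + real CARD('n) \<le> ln (det L) + trace (matrix_inv L ** S)"
proof -
  obtain P :: "real^'n^'n" where P: "invertible P" "transpose P ** L ** P = mat 1"
    using spd_congruent_to_identity[OF L] by blast
  have "L ** (P ** transpose P) = mat 1"
    using P by (metis matrix_inv_left matrix_inv_right matrix_mul_assoc matrix_mul_lid transpose_invertible)
  then have L_inv: "matrix_inv L = P ** transpose P" by (rule matrix_inv_unique)
  define N where "N = transpose P ** S ** P"
  have "spd N" unfolding N_def by (rule spd_congruence_invertible[OF S P(1)])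
  then have "ln (det N) \<le> trace N - real CARD('n)" by (rule ln_det_le_trace_minus_card)
  moreover have "trace (matrix_inv L ** S) = trace N"
    unfolding L_inv N_def by (metis matrix_mul_assoc trace_mul_sym)
  moreover have "ln (det N) = ln (det S) - ln (det L)"
  proof -
    have "det P * det L * det P = 1" "det N = det P * det S * det P"
      using arg_cong[OF P(2), of det] unfolding N_def by (simp_all add: det_mul)
    moreover have "det L > 0" "det S > 0" using spd_det_pos L S by auto
    ultimately have "det N = det S / det L" by (simp add: field_simps)
    then show ?thesis using \<open>det L > 0\<close> \<open>det S > 0\<close> by (simp add: ln_div)
  qed
  ultimately show ?thesis by simp
qed

text \<open>The precision matrix of the covariance obtained from \<open>\<Delta>\<close> by replacing its compression
  \<open>\<alpha>\<^sup>T \<Delta> \<alpha>\<close> with \<open>X\<close>.\<close>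

definition compression_update :: "real^'d^'p \<Rightarrow> real^'d^'d \<Rightarrow> real^'p^'p \<Rightarrow> real^'p^'p" where
  "compression_update \<alpha> X \<Delta> = matrix_inv \<Delta> - \<alpha> ** matrix_inv (transpose \<alpha> ** \<Delta> ** \<alpha>) ** transpose \<alpha>
     + \<alpha> ** matrix_inv X ** transpose \<alpha>"

lemma compression_update_self: "compression_update \<alpha> (transpose \<alpha> ** \<Delta> ** \<alpha>) \<Delta> = matrix_inv \<Delta>"
  by (simp add: compression_update_def)

text \<open>Expand \<open>0 \<le> z\<^sup>T \<Delta>\<^sup>-\<^sup>1 z\<close> for \<open>z = x - \<Delta> \<alpha> (\<alpha>\<^sup>T \<Delta> \<alpha>)\<^sup>-\<^sup>1 \<alpha>\<^sup>T x\<close>.\<close>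

lemma compression_quadratic_le:
  fixes \<alpha> :: "real^'d^'p" and \<Delta> :: "real^'p^'p"
  assumes D: "spd \<Delta>" and A: "invertible (transpose \<alpha> ** \<Delta> ** \<alpha>)"
  shows "(transpose \<alpha> *v x) \<bullet> (matrix_inv (transpose \<alpha> ** \<Delta> ** \<alpha>) *v (transpose \<alpha> *v x))
    \<le> x \<bullet> (matrix_inv \<Delta> *v x)"
proof -
  define u where "u = transpose \<alpha> *v x"
  define y where "y = matrix_inv (transpose \<alpha> ** \<Delta> ** \<alpha>) *v u"
  define z where "z = x - \<Delta> *v (\<alpha> *v y)"
  have invD: "invertible \<Delta>" by (rule spd_invertible[OF D])
  have symD: "transpose \<Delta> = \<Delta>" by (rule spd_symmetric[OF D])
  have Dinv_z: "matrix_inv \<Delta> *v z = matrix_inv \<Delta> *v x - \<alpha> *v y"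
    unfolding z_def
    by (simp add: matrix_vector_mult_diff_distrib matrix_vector_mul_assoc matrix_mul_assoc
        matrix_inv_left[OF invD])
  have xy: "x \<bullet> (\<alpha> *v y) = u \<bullet> y"
    unfolding u_def by (simp add: inner_matrix_vector_mult)
  have "(\<Delta> *v (\<alpha> *v y)) \<bullet> (matrix_inv \<Delta> *v x) = (\<alpha> *v y) \<bullet> (\<Delta> *v (matrix_inv \<Delta> *v x))"
    by (rule inner_symmetric_matrix[OF symD])
  also have "\<Delta> *v (matrix_inv \<Delta> *v x) = x"
    by (simp add: matrix_vector_mul_assoc matrix_inv_right[OF invD])
  finally have "(\<Delta> *v (\<alpha> *v y)) \<bullet> (matrix_inv \<Delta> *v x) = (\<alpha> *v y) \<bullet> x" .
  moreover have "(\<Delta> *v (\<alpha> *v y)) \<bullet> (\<alpha> *v y) = y \<bullet> u"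
    using inner_congruence[of y \<alpha> \<Delta>]
    by (simp add: inner_commute y_def matrix_vector_mul_assoc matrix_inv_right[OF A])
  ultimately have "z \<bullet> (matrix_inv \<Delta> *v z) = x \<bullet> (matrix_inv \<Delta> *v x) - u \<bullet> y"
    unfolding Dinv_z by (simp add: z_def inner_diff_left inner_diff_right xy inner_commute)
  moreover have "0 \<le> z \<bullet> (matrix_inv \<Delta> *v z)"
    using spd_quadratic_pos[OF spd_matrix_inv[OF D], of z] by (cases "z = 0") auto
  ultimately show ?thesis unfolding y_def u_def by simp
qed

lemma spd_compression_update:
  fixes \<alpha> :: "real^'d^'p"
  assumes orth: "transpose \<alpha> ** \<alpha> = mat 1" and D: "spd \<Delta>" and X: "spd X"
  shows "spd (compression_update \<alpha> X \<Delta>)"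
proof -
  define A where "A = transpose \<alpha> ** \<Delta> ** \<alpha>"
  have A: "spd A"
    unfolding A_def by (rule spd_congruence[OF D orthonormal_columns_kernel_zero[OF orth]])
  have sym: "transpose (matrix_inv B) = matrix_inv B" if "spd B" for B :: "real^'k^'k"
    by (rule spd_symmetric[OF spd_matrix_inv[OF that]])
  have "transpose (compression_update \<alpha> X \<Delta>) = compression_update \<alpha> X \<Delta>"
    using sym[OF D] sym[OF A] sym[OF X]
    by (simp add: compression_update_def A_def[symmetric] transpose_add transpose_diff
        matrix_transpose_mul matrix_mul_assoc)
  moreover have "x \<bullet> (compression_update \<alpha> X \<Delta> *v x) > 0" if "x \<noteq> 0" for x
  proof -
    define u where "u = transpose \<alpha> *v x"
    have "x \<bullet> (compression_update \<alpha> X \<Delta> *v x)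
        = x \<bullet> (matrix_inv \<Delta> *v x) - u \<bullet> (matrix_inv A *v u) + u \<bullet> (matrix_inv X *v u)"
      using inner_congruence[of x "transpose \<alpha>"]
      by (simp add: compression_update_def A_def[symmetric] u_def matrix_vector_mult_add_rdistrib
          matrix_vector_mult_diff_rdistrib inner_add_right inner_diff_right)
    moreover have "u \<bullet> (matrix_inv A *v u) \<le> x \<bullet> (matrix_inv \<Delta> *v x)"
      unfolding u_def A_def by (rule compression_quadratic_le[OF D spd_invertible[OF A[unfolded A_def]]])
    moreover have "0 < x \<bullet> (matrix_inv \<Delta> *v x)"
      by (rule spd_quadratic_pos[OF spd_matrix_inv[OF D] that])
    moreover have "u \<noteq> 0 \<Longrightarrow> 0 < u \<bullet> (matrix_inv X *v u)"
      by (rule spd_quadratic_pos[OF spd_matrix_inv[OF X]])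
    ultimately show ?thesis by (cases "u = 0") auto
  qed
  ultimately show ?thesis by (simp add: spd_def)
qed

lemma compression_of_inverse_compression_update:
  fixes \<alpha> :: "real^'d^'p"
  assumes orth: "transpose \<alpha> ** \<alpha> = mat 1" and D: "spd \<Delta>" and X: "spd X"
  shows "transpose \<alpha> ** matrix_inv (compression_update \<alpha> X \<Delta>) ** \<alpha> = X"
proof -
  define A where "A = transpose \<alpha> ** \<Delta> ** \<alpha>"
  define L where "L = matrix_inv (compression_update \<alpha> X \<Delta>)"
  have invA: "invertible A" unfolding A_def
    by (rule spd_invertible[OF spd_congruence[OF D orthonormal_columns_kernel_zero[OF orth]]])
  have invN: "invertible (compression_update \<alpha> X \<Delta>)"
    by (rule spd_invertible[OF spd_compression_update[OF orth D X]])
  have "matrix_inv \<Delta> ** \<Delta> ** \<alpha> = \<alpha>"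
    by (simp add: matrix_inv_left[OF spd_invertible[OF D]])
  moreover have "\<alpha> ** matrix_inv A ** transpose \<alpha> ** \<Delta> ** \<alpha> = \<alpha>"
    by (metis A_def matrix_inv_left[OF invA] matrix_mul_assoc matrix_mul_rid)
  ultimately have "compression_update \<alpha> X \<Delta> ** \<Delta> ** \<alpha> = \<alpha> ** matrix_inv X ** A"
    by (simp add: compression_update_def A_def[symmetric] matrix_add_rdistrib matrix_diff_rdistrib)
      (simp add: A_def matrix_mul_assoc)
  then have D_alpha: "\<Delta> ** \<alpha> = L ** \<alpha> ** matrix_inv X ** A"
    using matrix_inv_left[OF invN] unfolding L_def
    by (metis matrix_mul_assoc matrix_mul_lid)
  have "A = transpose \<alpha> ** (\<Delta> ** \<alpha>)"
    unfolding A_def by (simp only: matrix_mul_assoc)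
  also have "\<dots> = (transpose \<alpha> ** L ** \<alpha>) ** matrix_inv X ** A"
    unfolding D_alpha by (simp only: matrix_mul_assoc)
  finally have "A = (transpose \<alpha> ** L ** \<alpha>) ** matrix_inv X ** A" .
  then have "A ** matrix_inv A ** X = (transpose \<alpha> ** L ** \<alpha>) ** matrix_inv X ** (A ** matrix_inv A) ** X"
    by (simp add: matrix_mul_assoc)
  then show ?thesis
    using matrix_inv_right[OF invA] matrix_inv_left[OF spd_invertible[OF X]]
    unfolding L_def by (simp add: matrix_mul_assoc[symmetric])
qed

lemma det_inverse_compression_update:
  fixes \<alpha> :: "real^'d^'p"
  assumes dp: "CARD('d) \<le> CARD('p)"
    and orth: "transpose \<alpha> ** \<alpha> = mat 1" and D: "spd \<Delta>" and X: "spd X"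
  shows "det (matrix_inv (compression_update \<alpha> X \<Delta>)) * det (transpose \<alpha> ** \<Delta> ** \<alpha>) = det \<Delta> * det X"
proof -
  define A where "A = transpose \<alpha> ** \<Delta> ** \<alpha>"
  define N where "N = compression_update \<alpha> X \<Delta>"
  have A: "spd A" unfolding A_def
    by (rule spd_congruence[OF D orthonormal_columns_kernel_zero[OF orth]])
  have invN: "invertible N" unfolding N_def
    by (rule spd_invertible[OF spd_compression_update[OF orth D X]])
  have "\<Delta> ** N = mat 1 - \<Delta> ** \<alpha> ** matrix_inv A ** transpose \<alpha> + \<Delta> ** \<alpha> ** matrix_inv X ** transpose \<alpha>"
    using matrix_inv_right[OF spd_invertible[OF D]]
    by (simp add: N_def compression_update_def A_def[symmetric] matrix_add_ldistrib
        matrix_diff_ldistrib matrix_mul_assoc)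
  also have "\<dots> = mat 1 + (\<Delta> ** \<alpha>) ** ((matrix_inv X - matrix_inv A) ** transpose \<alpha>)"
    by (simp add: matrix_diff_ldistrib matrix_diff_rdistrib matrix_mul_assoc)
  finally have "\<Delta> ** N = mat 1 + (\<Delta> ** \<alpha>) ** ((matrix_inv X - matrix_inv A) ** transpose \<alpha>)" .
  then have "det (\<Delta> ** N) = det (mat 1 + ((matrix_inv X - matrix_inv A) ** transpose \<alpha>) ** (\<Delta> ** \<alpha>))"
    using sylvester_determinant[OF dp] by simp
  also have "\<dots> = det (matrix_inv X ** A)"
    using matrix_inv_left[OF spd_invertible[OF A]]
    by (simp add: A_def matrix_diff_rdistrib matrix_mul_assoc)
  finally have "det \<Delta> * det N = det A / det X"
    by (simp add: det_mul det_matrix_inv[OF spd_invertible[OF X]])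
  moreover have "det \<Delta> > 0" "det X > 0" using spd_det_pos D X by auto
  moreover have "det N \<noteq> 0" using invN by (simp add: invertible_det_nz)
  ultimately show ?thesis
    unfolding N_def[symmetric] A_def[symmetric] det_matrix_inv[OF invN]
    by (simp add: field_simps)
qed

lemma compression_update_inverse_compression_update:
  fixes \<alpha> :: "real^'d^'p"
  assumes orth: "transpose \<alpha> ** \<alpha> = mat 1" and D: "spd \<Delta>" and X: "spd X"
  shows "compression_update \<alpha> Y (matrix_inv (compression_update \<alpha> X \<Delta>)) = compression_update \<alpha> Y \<Delta>"
proof -
  define N where "N = compression_update \<alpha> X \<Delta>"
  have "matrix_inv (matrix_inv N) = N" unfolding N_def
    by (rule matrix_inv_matrix_inv[OF spd_invertible[OF spd_compression_update[OF orth D X]]])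
  moreover have "transpose \<alpha> ** matrix_inv N ** \<alpha> = X"
    unfolding N_def by (rule compression_of_inverse_compression_update[OF orth D X])
  ultimately have "compression_update \<alpha> Y (matrix_inv N)
      = N - \<alpha> ** matrix_inv X ** transpose \<alpha> + \<alpha> ** matrix_inv Y ** transpose \<alpha>"
    by (simp only: compression_update_def)
  then show ?thesis by (simp add: N_def compression_update_def)
qed

definition profile_objective :: "real^'p^'p \<Rightarrow> real^'d^'d \<Rightarrow> real^'d^'p \<Rightarrow> real^'p^'p \<Rightarrow> real" where
  "profile_objective S T \<alpha> \<Delta> =
     ln (det \<Delta>) + trace (matrix_inv \<Delta> ** S) - trace (matrix_inv (transpose \<alpha> ** \<Delta> ** \<alpha>) ** T)"

lemma G_fun_eq_profile_objective:
  fixes S Sf \<Delta> :: "real^'p^'p" and \<alpha> :: "real^'d^'p"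
  shows "G_fun nn S Sf \<alpha> \<Delta> = - (real CARD('p) * nn / 2) * ln (2 * pi)
     - (nn / 2) * profile_objective S (transpose \<alpha> ** Sf ** \<alpha>) \<alpha> \<Delta>"
  by (simp add: G_fun_def profile_objective_def algebra_simps)

lemma profile_objective_split:
  fixes S \<Delta> :: "real^'p^'p" and \<alpha> :: "real^'d^'p" and T :: "real^'d^'d"
  assumes dp: "CARD('d) \<le> CARD('p)" and orth: "transpose \<alpha> ** \<alpha> = mat 1"
    and S: "spd S" and D: "spd \<Delta>"
  defines "X \<equiv> transpose \<alpha> ** S ** \<alpha>" and "A \<equiv> transpose \<alpha> ** \<Delta> ** \<alpha>"
    and "L \<equiv> matrix_inv (compression_update \<alpha> (transpose \<alpha> ** S ** \<alpha>) \<Delta>)"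
  shows "profile_objective S T \<alpha> \<Delta> = (ln (det L) + trace (matrix_inv L ** S))
    + (ln (det A) + trace (matrix_inv A ** (X - T))) - ln (det X) - real CARD('d)"
proof -
  have X: "spd X" unfolding X_def by (rule spd_congruence[OF S orthonormal_columns_kernel_zero[OF orth]])
  have A: "spd A" unfolding A_def by (rule spd_congruence[OF D orthonormal_columns_kernel_zero[OF orth]])
  define N where "N = compression_update \<alpha> X \<Delta>"
  have L_def': "L = matrix_inv N" unfolding L_def N_def X_def ..
  have N: "spd N" unfolding N_def by (rule spd_compression_update[OF orth D X])
  have L_inv: "matrix_inv L = N"
    unfolding L_def' by (rule matrix_inv_matrix_inv[OF spd_invertible[OF N]])
  have "det L * det A = det \<Delta> * det X"
    unfolding L_def' N_def A_def X_def by (rule det_inverse_compression_update[OF dp orth D X[unfolded X_def]])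
  then have "ln (det L * det A) = ln (det \<Delta> * det X)" by simp
  moreover have "det L > 0" unfolding L_def' by (rule spd_det_pos[OF spd_matrix_inv[OF N]])
  moreover have "det A > 0" "det X > 0" "det \<Delta> > 0" by (rule spd_det_pos, fact)+
  ultimately have ln_det: "ln (det \<Delta>) = ln (det L) + ln (det A) - ln (det X)"
    by (simp add: ln_mult)
  have "matrix_inv \<Delta> = N + \<alpha> ** matrix_inv A ** transpose \<alpha> - \<alpha> ** matrix_inv X ** transpose \<alpha>"
    by (simp add: N_def compression_update_def A_def)
  then have "trace (matrix_inv \<Delta> ** S) = trace (N ** S) + trace (matrix_inv A ** X) - real CARD('d)"
    by (simp add: matrix_add_rdistrib matrix_diff_rdistrib trace_add trace_sub trace_sandwich
        X_def[symmetric] trace_matrix_inv_mult[OF spd_invertible[OF X]])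
  moreover have "trace (matrix_inv A ** T) = trace (matrix_inv A ** X) - trace (matrix_inv A ** (X - T))"
    by (simp add: matrix_diff_ldistrib trace_sub)
  ultimately show ?thesis
    unfolding profile_objective_def A_def[symmetric] ln_det L_inv by simp
qed

lemma profile_objective_lower_bound:
  fixes S \<Delta> :: "real^'p^'p" and \<alpha> :: "real^'d^'p" and T :: "real^'d^'d"
  assumes dp: "CARD('d) \<le> CARD('p)" and orth: "transpose \<alpha> ** \<alpha> = mat 1"
    and S: "spd S" and R: "spd (transpose \<alpha> ** S ** \<alpha> - T)" and D: "spd \<Delta>"
  shows "ln (det S) + ln (det (transpose \<alpha> ** S ** \<alpha> - T)) - ln (det (transpose \<alpha> ** S ** \<alpha>))
    + real CARD('p) \<le> profile_objective S T \<alpha> \<Delta>"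
proof -
  have X: "spd (transpose \<alpha> ** S ** \<alpha>)"
    by (rule spd_congruence[OF S orthonormal_columns_kernel_zero[OF orth]])
  have A: "spd (transpose \<alpha> ** \<Delta> ** \<alpha>)"
    by (rule spd_congruence[OF D orthonormal_columns_kernel_zero[OF orth]])
  have L: "spd (matrix_inv (compression_update \<alpha> (transpose \<alpha> ** S ** \<alpha>) \<Delta>))"
    by (rule spd_matrix_inv[OF spd_compression_update[OF orth D X]])
  show ?thesis
    using ln_det_trace_bound[OF L S] ln_det_trace_bound[OF A R]
    unfolding profile_objective_split[OF dp orth S D] by simp
qed

lemma profile_objective_at_compression_update:
  fixes S :: "real^'p^'p" and \<alpha> :: "real^'d^'p" and T :: "real^'d^'d"
  assumes dp: "CARD('d) \<le> CARD('p)" and orth: "transpose \<alpha> ** \<alpha> = mat 1"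
    and S: "spd S" and R: "spd (transpose \<alpha> ** S ** \<alpha> - T)"
  shows "profile_objective S T \<alpha> (matrix_inv (compression_update \<alpha> (transpose \<alpha> ** S ** \<alpha> - T) S))
    = ln (det S) + ln (det (transpose \<alpha> ** S ** \<alpha> - T)) - ln (det (transpose \<alpha> ** S ** \<alpha>))
      + real CARD('p)"
proof -
  define X where "X = transpose \<alpha> ** S ** \<alpha>"
  define \<Delta> where "\<Delta> = matrix_inv (compression_update \<alpha> (X - T) S)"
  have X: "spd X" unfolding X_def
    by (rule spd_congruence[OF S orthonormal_columns_kernel_zero[OF orth]])
  have D: "spd \<Delta>" unfolding \<Delta>_def
    by (rule spd_matrix_inv[OF spd_compression_update[OF orth S R[folded X_def]]])
  have "transpose \<alpha> ** \<Delta> ** \<alpha> = X - T"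
    unfolding \<Delta>_def by (rule compression_of_inverse_compression_update[OF orth S R[folded X_def]])
  moreover have "matrix_inv (compression_update \<alpha> X \<Delta>) = S"
    using compression_update_inverse_compression_update[OF orth S R[folded X_def], of X]
      compression_update_self[of \<alpha> S] matrix_inv_matrix_inv[OF spd_invertible[OF S]]
    unfolding \<Delta>_def X_def by simp
  ultimately show ?thesis
    unfolding \<Delta>_def[symmetric] X_def[symmetric] profile_objective_split[OF dp orth S D, of T, folded X_def]
    using trace_matrix_inv_mult[OF spd_invertible[OF S]] trace_matrix_inv_mult[OF spd_invertible[OF R[folded X_def]]]
    by simp
qed

text \<open>The hypotheses on \<open>F\<close> only make \<open>S\<^sub>f\<^sub>i\<^sub>t\<close> meaningful in the paper.\<close>

theorem mainTheorem2:
  fixes S :: "real^'p^'p" and F :: "real^'r^'n" and M :: "real^'p^'n"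
    and \<alpha> :: "real^'d^'p"
  assumes d_le_p: "CARD('d) \<le> CARD('p)"
    and d_le_r: "CARD('d) \<le> CARD('r)"
    and S_spd: "spd S"
    and F_rank: "rank F = CARD('r)"
    and Sres_spd: "spd (S - S_fit F M)"
    and alpha_orth: "transpose \<alpha> ** \<alpha> = mat 1"
  defines "nn \<equiv> real CARD('n)"
    and "Dinv \<equiv> matrix_inv S
                + \<alpha> ** matrix_inv (transpose \<alpha> ** (S - S_fit F M) ** \<alpha>) ** transpose \<alpha>
                - \<alpha> ** matrix_inv (transpose \<alpha> ** S ** \<alpha>) ** transpose \<alpha>"
  shows "invertible Dinv \<and> spd (matrix_inv Dinv)
         \<and> (\<forall>\<Delta>. spd \<Delta> \<longrightarrow> G_fun nn S (S_fit F M) \<alpha> \<Delta> \<le> G_fun nn S (S_fit F M) \<alpha> (matrix_inv Dinv))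
         \<and> G_fun nn S (S_fit F M) \<alpha> (matrix_inv Dinv) =
             - (real CARD('p) * nn / 2) * (ln (2 * pi) + 1)
             - (nn / 2) * ln (det (transpose \<alpha> ** (S - S_fit F M) ** \<alpha>))
             - (nn / 2) * ln (det S)
             + (nn / 2) * ln (det (transpose \<alpha> ** S ** \<alpha>))"
proof -
  define T where "T = transpose \<alpha> ** S_fit F M ** \<alpha>"
  have R_eq: "transpose \<alpha> ** (S - S_fit F M) ** \<alpha> = transpose \<alpha> ** S ** \<alpha> - T"
    unfolding T_def by (simp add: matrix_diff_ldistrib matrix_diff_rdistrib)
  have R: "spd (transpose \<alpha> ** S ** \<alpha> - T)"
    unfolding R_eq[symmetric] by (rule spd_congruence[OF Sres_spd orthonormal_columns_kernel_zero[OF alpha_orth]])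
  have Dinv_eq: "Dinv = compression_update \<alpha> (transpose \<alpha> ** S ** \<alpha> - T) S"
    unfolding Dinv_def R_eq compression_update_def by simp
  have Dinv: "spd Dinv"
    unfolding Dinv_eq by (rule spd_compression_update[OF alpha_orth S_spd R])
  have opt: "profile_objective S T \<alpha> (matrix_inv Dinv) = ln (det S)
      + ln (det (transpose \<alpha> ** S ** \<alpha> - T)) - ln (det (transpose \<alpha> ** S ** \<alpha>)) + real CARD('p)"
    unfolding Dinv_eq by (rule profile_objective_at_compression_update[OF d_le_p alpha_orth S_spd R])
  have "profile_objective S T \<alpha> (matrix_inv Dinv) \<le> profile_objective S T \<alpha> \<Delta>" if "spd \<Delta>" for \<Delta>
    unfolding opt by (rule profile_objective_lower_bound[OF d_le_p alpha_orth S_spd R that])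
  then have "G_fun nn S (S_fit F M) \<alpha> \<Delta> \<le> G_fun nn S (S_fit F M) \<alpha> (matrix_inv Dinv)" if "spd \<Delta>" for \<Delta>
    using that unfolding G_fun_eq_profile_objective T_def[symmetric] nn_def
    by (simp add: mult_left_mono)
  then show ?thesis
    using spd_invertible[OF Dinv] spd_matrix_inv[OF Dinv]
    unfolding G_fun_eq_profile_objective T_def[symmetric] opt R_eq by (simp add: algebra_simps)
qed
end
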